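(* Let $n$, $m$, and $k$ be any nonnegative integers. Then \[ \sum_{c\ge0} q^{c(c-1+k)} [2c+k]_q \genfrac{[}{]}{0pt}{}{2n+k}{n-c}_q\genfrac{[}{]}{0pt}{}{2m+k}{m-c}_q =\frac{[n+k]_q [m+k]_q}{[n+m+k]_q}\genfrac{[}{]}{0pt}{}{2n+k}{n+k}_q \genfrac{[}{]}{0pt}{}{2m+k}{m+k}_q. \]
   Context: Notation: $[n]_q=\frac{1-q^n}{1-q}$, $[n]_q!=[1]_q[2]_q\cdots[n]_q$, and $\genfrac{[}{]}{0pt}{}{n}{k}_q=\frac{[n]_q!}{[k]_q![n-k]_q!}$ denotes the $q$-binomial coefficient. *)

theory Defs
  imports Main
begin

definition qint :: "'a::field \<Rightarrow> nat \<Rightarrow> 'a" where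
  "qint q n = (1 - q ^ n) / (1 - q)"

definition qfact :: "'a::field \<Rightarrow> nat \<Rightarrow> 'a" where
  "qfact q n = (\<Prod>i\<in>{1..n}. qint q i)"

definition qbinom :: "'a::field \<Rightarrow> nat \<Rightarrow> int \<Rightarrow> 'a" where
  "qbinom q N j = (if 0 \<le> j \<and> j \<le> int N
      then qfact q N / (qfact q (nat j) * qfact q (N - nat j)) else 0)"

end

theory Submission
  imports Defs
begin

text \<open>The sum telescopes: with
  \<open>T c = q^(c(c-1+k)) [n+c+k] [m+c+k] qbinom (2n+k) (n-c) qbinom (2m+k) (m-c)\<close>,
  the \<open>c\<close>-th summand times \<open>[n+m+k]\<close> equals \<open>T c - T (c+1)\<close>.  This reduces, via the ratio
  of consecutive q-binomial coefficients, to the identity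
  \<open>[a+d] [b+d] - q^d [a] [b] = [d] [a+b+d]\<close> with \<open>d = 2c+k\<close>.  Hence the sum times
  \<open>[n+m+k]\<close> is \<open>T 0\<close>, which is the right-hand side after q-binomial symmetry.\<close>

lemma qint_0 [simp]: "qint q 0 = 0"
  by (simp add: qint_def)

lemma qint_nonzero:
  fixes q :: "'a::field"
  assumes q_generic: "\<And>j::nat. j \<ge> 1 \<Longrightarrow> q ^ j \<noteq> 1" and "i \<ge> 1"
  shows "qint q i \<noteq> 0"
  using q_generic[of 1] q_generic[OF \<open>i \<ge> 1\<close>] by (simp add: qint_def)

lemma qfact_Suc: "qfact q (Suc j) = qfact q j * qint q (Suc j)"
  unfolding qfact_def by (simp add: prod.nat_ivl_Suc' mult.commute)

lemma qint_add_mult_qint_add: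
  fixes q :: "'a::field"
  shows "qint q (a + d) * qint q (b + d) - q ^ d * qint q a * qint q b
       = qint q d * qint q (a + b + d)"
proof (cases "q = 1")
  case False
  have "(1 - q^a * q^d) * (1 - q^b * q^d) - q^d * (1 - q^a) * (1 - q^b)
      = (1 - q^d) * (1 - q^a * q^b * q^d)"
    by (simp add: algebra_simps)
  with False show ?thesis
    by (simp add: qint_def power_add divide_simps)
qed (simp add: qint_def)

lemma qbinom_symmetric:
  assumes "j \<le> N"
  shows "qbinom q N (int j) = qbinom q N (int (N - j))"
proof -
  have "nat (int (N - j)) = N - j" "N - (N - j) = j" using assms by auto
  then show ?thesis using assms by (simp add: qbinom_def mult.commute)
qed

lemma qbinom_mult_qint_diff:
  fixes q :: "'a::field"
  assumes q_generic: "\<And>j::nat. j \<ge> 1 \<Longrightarrow> q ^ j \<noteq> 1" and "j < N"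
  shows "qbinom q N (int j) * qint q (N - j) = qbinom q N (int j + 1) * qint q (Suc j)"
proof -
  obtain r where r: "N - j = Suc r" "N - Suc j = r"
    using \<open>j < N\<close> by (metis Suc_diff_Suc)
  have "nat (int j + 1) = Suc j" by simp
  then have binoms:
    "qbinom q N (int j) = qfact q N / (qfact q j * qfact q r * qint q (Suc r))"
    "qbinom q N (int j + 1) = qfact q N / (qfact q j * qint q (Suc j) * qfact q r)"
    using \<open>j < N\<close> r by (simp_all add: qbinom_def qfact_Suc mult.assoc)
  have "qint q (Suc r) \<noteq> 0" "qint q (Suc j) \<noteq> 0"
    using qint_nonzero[OF q_generic] by auto
  then show ?thesis
    unfolding binoms r(1) by (simp add: field_simps)
qed

lemma qbinom_central_shift:
  fixes q :: "'a::field"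
  assumes q_generic: "\<And>j::nat. j \<ge> 1 \<Longrightarrow> q ^ j \<noteq> 1"
  shows "qbinom q (2*n + k) (int n - int (Suc c)) * qint q (n + c + k + 1)
       = qbinom q (2*n + k) (int n - int c) * qint q (n - c)"
proof (cases "c < n")
  case True
  define j where "j = n - Suc c"
  have j: "j < 2*n + k" "2*n + k - j = n + c + k + 1" "int n - int (Suc c) = int j"
    "int n - int c = int j + 1" "Suc j = n - c"
    using True by (auto simp: j_def)
  from qbinom_mult_qint_diff[OF q_generic j(1)] show ?thesis
    unfolding j(2-5) by (simp add: mult.commute)
next
  case False
  then show ?thesis by (simp add: qbinom_def)
qed

definition qsum_antidiff :: "'a::field \<Rightarrow> nat \<Rightarrow> nat \<Rightarrow> nat \<Rightarrow> nat \<Rightarrow> 'a" where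
  "qsum_antidiff q n m k c = q ^ (c * (c - 1 + k))
     * qbinom q (2*n + k) (int n - int c) * qbinom q (2*m + k) (int m - int c)
     * qint q (n + c + k) * qint q (m + c + k)"

lemma qsum_summand_telescopes:
  fixes q :: "'a::field"
  assumes q_generic: "\<And>j::nat. j \<ge> 1 \<Longrightarrow> q ^ j \<noteq> 1"
  shows "q ^ (c * (c - 1 + k)) * qint q (2*c + k)
           * qbinom q (2*n + k) (int n - int c) * qbinom q (2*m + k) (int m - int c)
           * qint q (n + m + k)
       = qsum_antidiff q n m k c - qsum_antidiff q n m k (Suc c)"
proof -
  define A where "A = qbinom q (2*n + k) (int n - int c)"
  define B where "B = qbinom q (2*m + k) (int m - int c)"
  define E where "E = q ^ (c * (c - 1 + k))"
  have exponent: "Suc c * (Suc c - 1 + k) = c * (c - 1 + k) + (2*c + k)"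
    by (cases c) (auto simp: algebra_simps)
  have "qsum_antidiff q n m k (Suc c)
      = E * q ^ (2*c + k)
        * (qbinom q (2*n + k) (int n - int (Suc c)) * qint q (n + c + k + 1))
        * (qbinom q (2*m + k) (int m - int (Suc c)) * qint q (m + c + k + 1))"
    unfolding qsum_antidiff_def exponent E_def by (simp add: power_add algebra_simps)
  also have "\<dots> = E * A * B * (q ^ (2*c + k) * qint q (n - c) * qint q (m - c))"
    using qbinom_central_shift[OF q_generic, of n k c] qbinom_central_shift[OF q_generic, of m k c]
    unfolding A_def B_def by (simp only: ac_simps)
  finally have next_term: "qsum_antidiff q n m k (Suc c) = \<dots>" .
  have this_term: "qsum_antidiff q n m k c = E * A * B * (qint q (n + c + k) * qint q (m + c + k))"
    by (simp add: qsum_antidiff_def A_def B_def E_def ac_simps)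
  show ?thesis
  proof (cases "c \<le> n \<and> c \<le> m")
    case True
    then have "n + c + k = (n - c) + (2*c + k)" "m + c + k = (m - c) + (2*c + k)"
      "n + m + k = (n - c) + (m - c) + (2*c + k)" by auto
    then have "qint q (n + c + k) * qint q (m + c + k) - q ^ (2*c + k) * qint q (n - c) * qint q (m - c)
        = qint q (2*c + k) * qint q (n + m + k)"
      by (simp only: qint_add_mult_qint_add)
    then show ?thesis
      unfolding next_term this_term A_def[symmetric] B_def[symmetric] E_def[symmetric]
      by (simp flip: right_diff_distrib add: ac_simps)
  next
    case False
    then have "A = 0 \<or> B = 0" by (auto simp: A_def B_def qbinom_def)
    then show ?thesis
      unfolding next_term this_term A_def[symmetric] B_def[symmetric] E_def[symmetric]
      by auto
  qed
qed

lemma qsum_antidiff_0: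
  "qsum_antidiff q n m k 0 = qint q (n + k) * qint q (m + k)
     * qbinom q (2*n + k) (int (n + k)) * qbinom q (2*m + k) (int (m + k))"
  using qbinom_symmetric[of n "2*n + k" q] qbinom_symmetric[of m "2*m + k" q]
  by (simp add: qsum_antidiff_def ac_simps)

lemma qsum_antidiff_vanishes:
  assumes "c > n"
  shows "qsum_antidiff q n m k c = 0"
  using assms by (simp add: qsum_antidiff_def qbinom_def)

theorem lemma3p5:
  fixes q :: "'a::field" and n m k :: nat
  assumes q_generic: "\<And>j::nat. j \<ge> 1 \<Longrightarrow> q ^ j \<noteq> 1"
  shows "(\<Sum>c\<le>n + m. q ^ (c * (c - 1 + k)) * qint q (2*c + k)
            * qbinom q (2*n + k) (int n - int c) * qbinom q (2*m + k) (int m - int c))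
         = qint q (n + k) * qint q (m + k) / qint q (n + m + k)
            * qbinom q (2*n + k) (int (n + k)) * qbinom q (2*m + k) (int (m + k))"
    (is "?S = _")
proof -
  let ?T = "qsum_antidiff q n m k"
  have "?S * qint q (n + m + k) = (\<Sum>c\<le>n + m. ?T c - ?T (Suc c))"
    unfolding sum_distrib_right
    by (intro sum.cong refl) (rule qsum_summand_telescopes[OF q_generic])
  also have "\<dots> = ?T 0"
    by (simp add: sum_telescope qsum_antidiff_vanishes)
  finally have "?S * qint q (n + m + k) = ?T 0" .
  moreover have "qint q (n + m + k) \<noteq> 0" if "n + m + k \<noteq> 0"
    using qint_nonzero[OF q_generic, of "n + m + k"] that by linarith
  ultimately show ?thesis
    by (cases "n + m + k = 0") (auto simp: qsum_antidiff_0 field_simps)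
qed

end
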